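(* Consider the MPVC in $\mathbb R^2$: minimize $|x_1|+|x_2|$ subject to $g(x)=x_1+x_2\le0$, $H(x)=x_1\ge0$, $G(x)H(x)=x_1(x_1^2-x_2^2)\le0$ where $G(x)=x_1^2-x_2^2$ (so $m=1$, $l=0$, $q=1$). At $x^\ast=(0,0)$, MPVC-generalized quasinormality fails, but MPVC-ACQ holds. Moreover, the penalty function $P_\alpha$ is exact at $x^\ast$. Consequently, MPVC-ACQ does not imply MPVC-generalized quasinormality, and exactness of $P_\alpha$ at a local minimizer does not imply MPVC-generalized quasinormality there.
   Context: MPVC setup: for continuously differentiable $g_i,h_j,G_i,H_i:\mathbb R^n\to\mathbb R$ the constraints are $g_i(x)\le0$ $(i\le m)$, $h_j(x)=0$ $(j\le l)$, $H_i(x)\ge0$, $G_i(x)H_i(x)\le0$ $(i\le q)$, with feasible set $\mathcal C$. For $x^\ast\in\mathcal C$: $I_g=\{i:g_i(x^\ast)=0\}$, $I_+=\{i:H_i(x^\ast)>0\}$, $I_{+0}=\{i:H_i(x^\ast)>0,G_i(x^\ast)=0\}$, $I_{+-}=\{i:H_i(x^\ast)>0,G_i(x^\ast)<0\}$, $I_{0+}=\{i:H_i(x^\ast)=0,G_i(x^\ast)>0\}$, $I_{0-}=\{i:H_i(x^\ast)=0,G_i(x^\ast)<0\}$, $I_{00}=\{i:H_i(x^\ast)=0,G_i(x^\ast)=0\}$. Admissible multipliers: $(\lambda,\mu,\eta^G,\eta^H)\in\mathbb R^m\times\mathbb R^l\times\mathbb R^q\times\mathbb R^q$ with (i) $\sum_i\lambda_i\nabla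 g_i(x^\ast)+\sum_j\mu_j\nabla h_j(x^\ast)+\sum_i\eta^G_i\nabla G_i(x^\ast)-\sum_i\eta^H_i\nabla H_i(x^\ast)=0$; (ii) $\lambda_i\ge0$ for $i\in I_g$, $\lambda_i=0$ for $i\notin I_g$; $\eta^G_i=0$ for $i\in I_{+-}\cup I_{0-}\cup I_{0+}$, $\eta^G_i\ge0$ for $i\in I_{+0}\cup I_{00}$; $\eta^H_i=0$ for $i\in I_+$, $\eta^H_i\ge0$ for $i\in I_{0-}$, $\eta^H_i$ free for $i\in I_{0+}$; $\eta^H_i\eta^G_i=0$ for $i\in I_{00}$. MPVC-generalized quasinormality holds at $x^\ast$ if there is no nonzero admissible multiplier for which there is a sequence $x^k\to x^\ast$ such that for all $k$: $\lambda_i>0\Rightarrow\lambda_ig_i(x^k)>0$; $\mu_j\neq0\Rightarrow\mu_jh_j(x^k)>0$; $\eta^H_i\ne0\Rightarrow\eta^H_iH_i(x^k)<0$; $\eta^G_i>0\Rightarrow\eta^G_iG_i(x^k)>0$. $T_{\mathcal C}(x^\ast)$ denotes the Bouligand tangent cone of $\mathcal C$ at $x^\ast$. The MPVC-linearized cone is $L_{MPVC}(x^\ast)=\{d:\nabla g_i(x^\ast)^Td\le0\ (i\in I_g);\ \nabla h_j(x^\ast)^Td=0\ (\forall j);\ \nabla H_i(x^\ast)^Td=0\ (i\in I_{0+});\ \nabla H_i(x^\ast)^Td\ge0\ (i\in I_{00}\cup I_{0-});\ \nabla G_i(x^\ast)^Td\le0\ (i\in I_{+0});\ (\nabla G_i(x^\ast)^Td)(\nabla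 H_i(x^\ast)^Td)\le0\ (i\in I_{00})\}$; MPVC-ACQ holds at $x^\ast$ if $T_{\mathcal C}(x^\ast)=L_{MPVC}(x^\ast)$. Penalty function: $P_\alpha(x)=f(x)+\alpha\big[\sum_i\max\{0,g_i(x)\}+\sum_j|h_j(x)|+\sum_i\max\{0,-H_i(x),\min\{G_i(x),H_i(x)\}\}\big]$ for $\alpha\ge0$; $P_\alpha$ is exact at $x^\ast$ if there is $\bar\alpha\ge0$ such that $x^\ast$ is a local minimizer of $P_\alpha$ on $\mathbb R^n$ for all $\alpha\ge\bar\alpha$. *)

theory Defs
  imports "HOL-Analysis.Analysis"
begin

text \<open>MPVC data: constraint functions indexed by nat (indices 0..m-1, 0..l-1, 0..q-1).
  The gradient pairing grad f(x)^T d is rendered as frechet_derivative f (at x) d.\<close>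

definition mpvc_feasible ::
  "(nat \<Rightarrow> 'a::euclidean_space \<Rightarrow> real) \<Rightarrow> nat \<Rightarrow> (nat \<Rightarrow> 'a \<Rightarrow> real) \<Rightarrow> nat \<Rightarrow>
   (nat \<Rightarrow> 'a \<Rightarrow> real) \<Rightarrow> (nat \<Rightarrow> 'a \<Rightarrow> real) \<Rightarrow> nat \<Rightarrow> 'a set" where
  "mpvc_feasible g m h l G H q =
     {x. (\<forall>i<m. g i x \<le> 0) \<and> (\<forall>j<l. h j x = 0) \<and>
         (\<forall>i<q. H i x \<ge> 0 \<and> G i x * H i x \<le> 0)}"

definition grad_dir :: "('a::euclidean_space \<Rightarrow> real) \<Rightarrow> 'a \<Rightarrow> 'a \<Rightarrow> real" where
  "grad_dir f x d = frechet_derivative f (at x) d"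

definition mpvc_admissible_mult ::
  "(nat \<Rightarrow> 'a::euclidean_space \<Rightarrow> real) \<Rightarrow> nat \<Rightarrow> (nat \<Rightarrow> 'a \<Rightarrow> real) \<Rightarrow> nat \<Rightarrow>
   (nat \<Rightarrow> 'a \<Rightarrow> real) \<Rightarrow> (nat \<Rightarrow> 'a \<Rightarrow> real) \<Rightarrow> nat \<Rightarrow> 'a \<Rightarrow>
   (nat \<Rightarrow> real) \<Rightarrow> (nat \<Rightarrow> real) \<Rightarrow> (nat \<Rightarrow> real) \<Rightarrow> (nat \<Rightarrow> real) \<Rightarrow> bool" where
  "mpvc_admissible_mult g m h l G H q xs lam mu etaG etaH \<longleftrightarrow>
     \<comment> \<open>multipliers live in R^m x R^l x R^q x R^q: components outside the ranges are 0\<close>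
     (\<forall>i\<ge>m. lam i = 0) \<and> (\<forall>j\<ge>l. mu j = 0) \<and> (\<forall>i\<ge>q. etaG i = 0 \<and> etaH i = 0) \<and>
     \<comment> \<open>(i) stationarity-type equation\<close>
     (\<forall>d. (\<Sum>i<m. lam i * grad_dir (g i) xs d) + (\<Sum>j<l. mu j * grad_dir (h j) xs d)
          + (\<Sum>i<q. etaG i * grad_dir (G i) xs d) - (\<Sum>i<q. etaH i * grad_dir (H i) xs d) = 0) \<and>
     \<comment> \<open>(ii) sign conditions\<close>
     (\<forall>i<m. (g i xs = 0 \<longrightarrow> lam i \<ge> 0) \<and> (g i xs \<noteq> 0 \<longrightarrow> lam i = 0)) \<and>
     (\<forall>i<q.
        ((H i xs > 0 \<and> G i xs < 0) \<or> (H i xs = 0 \<and> G i xs < 0) \<or> (H i xs = 0 \<and> G i xs > 0)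
            \<longrightarrow> etaG i = 0) \<and>
        ((H i xs > 0 \<and> G i xs = 0) \<or> (H i xs = 0 \<and> G i xs = 0) \<longrightarrow> etaG i \<ge> 0) \<and>
        (H i xs > 0 \<longrightarrow> etaH i = 0) \<and>
        (H i xs = 0 \<and> G i xs < 0 \<longrightarrow> etaH i \<ge> 0) \<and>
        (H i xs = 0 \<and> G i xs = 0 \<longrightarrow> etaH i * etaG i = 0))"

definition mpvc_GQN ::
  "(nat \<Rightarrow> 'a::euclidean_space \<Rightarrow> real) \<Rightarrow> nat \<Rightarrow> (nat \<Rightarrow> 'a \<Rightarrow> real) \<Rightarrow> nat \<Rightarrow>
   (nat \<Rightarrow> 'a \<Rightarrow> real) \<Rightarrow> (nat \<Rightarrow> 'a \<Rightarrow> real) \<Rightarrow> nat \<Rightarrow> 'a \<Rightarrow> bool" where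
  "mpvc_GQN g m h l G H q xs \<longleftrightarrow>
     \<not> (\<exists>lam mu etaG etaH.
          mpvc_admissible_mult g m h l G H q xs lam mu etaG etaH \<and>
          (lam, mu, etaG, etaH) \<noteq> (\<lambda>_. 0, \<lambda>_. 0, \<lambda>_. 0, \<lambda>_. 0) \<and>
          (\<exists>xk :: nat \<Rightarrow> 'a. xk \<longlonglongrightarrow> xs \<and>
             (\<forall>k. (\<forall>i<m. lam i > 0 \<longrightarrow> lam i * g i (xk k) > 0) \<and>
                  (\<forall>j<l. mu j \<noteq> 0 \<longrightarrow> mu j * h j (xk k) > 0) \<and>
                  (\<forall>i<q. etaH i \<noteq> 0 \<longrightarrow> etaH i * H i (xk k) < 0) \<and>
                  (\<forall>i<q. etaG i > 0 \<longrightarrow> etaG i * G i (xk k) > 0))))"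

definition tangent_cone :: "'a::real_normed_vector set \<Rightarrow> 'a \<Rightarrow> 'a set" where
  "tangent_cone C xs = {d. \<exists>(xk :: nat \<Rightarrow> 'a) (t :: nat \<Rightarrow> real).
      (\<forall>k. xk k \<in> C \<and> t k > 0) \<and> xk \<longlonglongrightarrow> xs \<and> t \<longlonglongrightarrow> 0 \<and>
      (\<lambda>k. (1 / t k) *\<^sub>R (xk k - xs)) \<longlonglongrightarrow> d}"

definition mpvc_lin_cone ::
  "(nat \<Rightarrow> 'a::euclidean_space \<Rightarrow> real) \<Rightarrow> nat \<Rightarrow> (nat \<Rightarrow> 'a \<Rightarrow> real) \<Rightarrow> nat \<Rightarrow>
   (nat \<Rightarrow> 'a \<Rightarrow> real) \<Rightarrow> (nat \<Rightarrow> 'a \<Rightarrow> real) \<Rightarrow> nat \<Rightarrow> 'a \<Rightarrow> 'a set" where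
  "mpvc_lin_cone g m h l G H q xs = {d.
     (\<forall>i<m. g i xs = 0 \<longrightarrow> grad_dir (g i) xs d \<le> 0) \<and>
     (\<forall>j<l. grad_dir (h j) xs d = 0) \<and>
     (\<forall>i<q. H i xs = 0 \<and> G i xs > 0 \<longrightarrow> grad_dir (H i) xs d = 0) \<and>
     (\<forall>i<q. H i xs = 0 \<and> G i xs \<le> 0 \<longrightarrow> grad_dir (H i) xs d \<ge> 0) \<and>
     (\<forall>i<q. H i xs > 0 \<and> G i xs = 0 \<longrightarrow> grad_dir (G i) xs d \<le> 0) \<and>
     (\<forall>i<q. H i xs = 0 \<and> G i xs = 0 \<longrightarrow> grad_dir (G i) xs d * grad_dir (H i) xs d \<le> 0)}"

definition mpvc_ACQ ::
  "(nat \<Rightarrow> 'a::euclidean_space \<Rightarrow> real) \<Rightarrow> nat \<Rightarrow> (nat \<Rightarrow> 'a \<Rightarrow> real) \<Rightarrow> nat \<Rightarrow>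
   (nat \<Rightarrow> 'a \<Rightarrow> real) \<Rightarrow> (nat \<Rightarrow> 'a \<Rightarrow> real) \<Rightarrow> nat \<Rightarrow> 'a \<Rightarrow> bool" where
  "mpvc_ACQ g m h l G H q xs \<longleftrightarrow>
     tangent_cone (mpvc_feasible g m h l G H q) xs = mpvc_lin_cone g m h l G H q xs"

definition mpvc_penalty ::
  "('a \<Rightarrow> real) \<Rightarrow> (nat \<Rightarrow> 'a \<Rightarrow> real) \<Rightarrow> nat \<Rightarrow> (nat \<Rightarrow> 'a \<Rightarrow> real) \<Rightarrow> nat \<Rightarrow>
   (nat \<Rightarrow> 'a \<Rightarrow> real) \<Rightarrow> (nat \<Rightarrow> 'a \<Rightarrow> real) \<Rightarrow> nat \<Rightarrow> real \<Rightarrow> 'a \<Rightarrow> real" where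
  "mpvc_penalty f g m h l G H q \<alpha> x = f x + \<alpha> *
     ((\<Sum>i<m. max 0 (g i x)) + (\<Sum>j<l. \<bar>h j x\<bar>) +
      (\<Sum>i<q. max 0 (max (- H i x) (min (G i x) (H i x)))))"

definition local_min_on :: "('a::metric_space \<Rightarrow> real) \<Rightarrow> 'a set \<Rightarrow> 'a \<Rightarrow> bool" where
  "local_min_on F S xs \<longleftrightarrow> xs \<in> S \<and> (\<exists>e>0. \<forall>y\<in>S. dist y xs < e \<longrightarrow> F xs \<le> F y)"

definition mpvc_penalty_exact ::
  "('a::euclidean_space \<Rightarrow> real) \<Rightarrow> (nat \<Rightarrow> 'a \<Rightarrow> real) \<Rightarrow> nat \<Rightarrow> (nat \<Rightarrow> 'a \<Rightarrow> real) \<Rightarrow> nat \<Rightarrow>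
   (nat \<Rightarrow> 'a \<Rightarrow> real) \<Rightarrow> (nat \<Rightarrow> 'a \<Rightarrow> real) \<Rightarrow> nat \<Rightarrow> 'a \<Rightarrow> bool" where
  "mpvc_penalty_exact f g m h l G H q xs \<longleftrightarrow>
     (\<exists>\<alpha>0\<ge>0. \<forall>\<alpha>\<ge>\<alpha>0. local_min_on (mpvc_penalty f g m h l G H q \<alpha>) UNIV xs)"

end

theory Submission
  imports Defs
begin

text \<open>The vanishing constraint is redundant: on \<open>x\<^sub>1 \<ge> 0, x\<^sub>1 + x\<^sub>2 \<le> 0\<close> one has
  \<open>x\<^sub>1 \<le> -x\<^sub>2\<close>, hence \<open>x\<^sub>1\<^sup>2 \<le> x\<^sub>2\<^sup>2\<close>. So the feasible set is the closed convex cone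
  \<open>C = {x\<^sub>1 \<ge> 0, x\<^sub>1 + x\<^sub>2 \<le> 0}\<close>, which is its own tangent cone at the origin; since
  \<open>\<nabla>G(0) = 0\<close>, the MPVC-linearized cone is also \<open>C\<close>, so ACQ holds. The same degeneracy
  \<open>\<nabla>G(0) = 0\<close> makes \<open>\<eta>\<^sup>G = 1\<close> an admissible multiplier, and \<open>G(1/k, 0) > 0\<close> violates
  quasinormality. Finally \<open>f \<ge> 0 = f(0)\<close> everywhere and the penalty terms are
  nonnegative, so every \<open>P\<^sub>\<alpha>\<close> with \<open>\<alpha> \<ge> 0\<close> is minimised at the origin.\<close>

lemma grad_dir_eqI:
  assumes "(f has_derivative f') (at x)"
  shows "grad_dir f x d = f' d"
  using frechet_derivative_at[OF assms] by (simp add: grad_dir_def)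

lemma LIMSEQ_inverse_Suc: "(\<lambda>k. 1 / (real k + 1)) \<longlonglongrightarrow> 0"
  using LIMSEQ_inverse_real_of_nat by (simp add: inverse_eq_divide add.commute)

lemma tangent_cone_closed_cone:
  fixes C :: "'a::real_normed_vector set"
  assumes "closed C" and "cone C"
  shows "tangent_cone C 0 = C"
proof
  show "tangent_cone C 0 \<subseteq> C"
  proof
    fix d assume "d \<in> tangent_cone C 0"
    then obtain xk and t :: "nat \<Rightarrow> real" where xk: "\<And>k. xk k \<in> C \<and> t k > 0"
      and lim: "(\<lambda>k. (1 / t k) *\<^sub>R xk k) \<longlonglongrightarrow> d"
      unfolding tangent_cone_def by auto
    have scaled_in_C: "(1 / t k) *\<^sub>R xk k \<in> C" for k
      using \<open>cone C\<close> xk[of k] by (simp add: cone_def)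
    show "d \<in> C"
      by (rule closed_sequentially[OF \<open>closed C\<close> scaled_in_C lim])
  qed
next
  show "C \<subseteq> tangent_cone C 0"
  proof
    fix d assume "d \<in> C"
    define t where "t k = 1 / (real k + 1)" for k
    have t_pos: "t k > 0" for k
      by (simp add: t_def)
    have "t k *\<^sub>R d \<in> C" for k
      using \<open>cone C\<close> \<open>d \<in> C\<close> t_pos[of k] by (simp add: cone_def)
    moreover have "t \<longlonglongrightarrow> 0"
      unfolding t_def by (rule LIMSEQ_inverse_Suc)
    moreover have "(\<lambda>k. t k *\<^sub>R d) \<longlonglongrightarrow> 0"
      using tendsto_scaleR[OF \<open>t \<longlonglongrightarrow> 0\<close> tendsto_const[of d]] by simp
    moreover have "(1 / t k) *\<^sub>R (t k *\<^sub>R d - 0) = d" for k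
      using t_pos[of k] by simp
    ultimately show "d \<in> tangent_cone C 0"
      unfolding tangent_cone_def using t_pos
      by (intro CollectI exI[of _ "\<lambda>k. t k *\<^sub>R d"] exI[of _ t]) auto
  qed
qed

lemma mpvc_penalty_ge:
  assumes "\<alpha> \<ge> 0"
  shows "f x \<le> mpvc_penalty f g m h l G H q \<alpha> x"
  using assms unfolding mpvc_penalty_def
  by (intro add_increasing2 mult_nonneg_nonneg add_nonneg_nonneg sum_nonneg) auto

lemma mpvc_penalty_feasible:
  assumes "x \<in> mpvc_feasible g m h l G H q"
  shows "mpvc_penalty f g m h l G H q \<alpha> x = f x"
proof -
  have "max 0 (max (- H i x) (min (G i x) (H i x))) = 0" if "i < q" for i
  proof -
    have "H i x \<ge> 0" and "G i x * H i x \<le> 0"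
      using assms \<open>i < q\<close> by (auto simp: mpvc_feasible_def)
    then have "min (G i x) (H i x) \<le> 0"
      by (cases "H i x = 0") (auto simp: mult_le_0_iff)
    with \<open>H i x \<ge> 0\<close> show ?thesis
      by simp
  qed
  with assms show ?thesis
    by (simp add: mpvc_penalty_def mpvc_feasible_def)
qed

lemma mpvc_penalty_exact_at_global_min:
  assumes "xs \<in> mpvc_feasible g m h l G H q" and "\<And>y. f xs \<le> f y"
  shows "mpvc_penalty_exact f g m h l G H q xs"
proof -
  have "mpvc_penalty f g m h l G H q \<alpha> xs \<le> mpvc_penalty f g m h l G H q \<alpha> y"
    if "\<alpha> \<ge> 0" for \<alpha> y
  proof -
    have "mpvc_penalty f g m h l G H q \<alpha> xs = f xs"
      using assms(1) by (rule mpvc_penalty_feasible)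
    also have "\<dots> \<le> f y"
      by (rule assms(2))
    also have "\<dots> \<le> mpvc_penalty f g m h l G H q \<alpha> y"
      using \<open>\<alpha> \<ge> 0\<close> by (rule mpvc_penalty_ge)
    finally show ?thesis .
  qed
  then show ?thesis
    unfolding mpvc_penalty_exact_def local_min_on_def
    by (intro exI[of _ 0]) (auto intro: exI[of _ 1])
qed

lemma not_mpvc_GQN_if_critical_biactive:
  assumes "i < q" and "H i xs = 0" and "G i xs = 0" and "\<And>d. grad_dir (G i) xs d = 0"
    and "xk \<longlonglongrightarrow> xs" and "\<And>k. G i (xk k) > 0"
  shows "\<not> mpvc_GQN g m h l G H q xs"
proof -
  define etaG where "etaG j = (if j = i then 1 else 0 :: real)" for j
  have "(\<Sum>j<q. etaG j * grad_dir (G j) xs d) = grad_dir (G i) xs d" for d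
    using \<open>i < q\<close> by (simp add: etaG_def if_distrib if_distribR sum.delta cong: if_cong)
  then have "mpvc_admissible_mult g m h l G H q xs (\<lambda>_. 0) (\<lambda>_. 0) etaG (\<lambda>_. 0)"
    using assms(1-4) by (auto simp: mpvc_admissible_mult_def etaG_def)
  moreover have "etaG \<noteq> (\<lambda>_. 0)"
    by (auto simp: etaG_def dest: fun_cong[of _ _ i])
  moreover have "etaG j > 0 \<Longrightarrow> etaG j * G j (xk k) > 0" for j k
    using assms(6) by (auto simp: etaG_def split: if_splits)
  ultimately show ?thesis
    unfolding mpvc_GQN_def using \<open>xk \<longlonglongrightarrow> xs\<close> by blast
qed

lemma grad_dir_fst_plus_snd: "grad_dir (\<lambda>x::real \<times> real. fst x + snd x) x d = fst d + snd d"
  by (intro grad_dir_eqI has_derivative_add has_derivative_fst has_derivative_snd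
      has_derivative_ident)

lemma grad_dir_fst: "grad_dir (\<lambda>x::real \<times> real. fst x) x d = fst d"
  by (intro grad_dir_eqI has_derivative_fst has_derivative_ident)

lemma grad_dir_squares_diff_origin:
  "grad_dir (\<lambda>x::real \<times> real. (fst x)\<^sup>2 - (snd x)\<^sup>2) (0, 0) d = 0"
proof -
  have "((\<lambda>x::real \<times> real. fst x * fst x - snd x * snd x) has_derivative
      (\<lambda>d. (fst x * fst d + fst d * fst x) - (snd x * snd d + snd d * snd x))) (at x)" for x
    by (intro has_derivative_diff has_derivative_mult has_derivative_fst has_derivative_snd
        has_derivative_ident)
  from this[of "(0, 0)"] show ?thesis
    by (intro grad_dir_eqI) (simp add: power2_eq_square)
qed

lemma example_feasible_set:
  "mpvc_feasible (\<lambda>_ x. fst x + snd x) 1 (\<lambda>_ _. 0) 0 (\<lambda>_ x. (fst x)\<^sup>2 - (snd x)\<^sup>2)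
      (\<lambda>_ x. fst x) 1 = {x :: real \<times> real. 0 \<le> fst x \<and> fst x + snd x \<le> 0}"
proof -
  have "((fst x)\<^sup>2 - (snd x)\<^sup>2) * fst x \<le> 0"
    if "0 \<le> fst x" and "fst x + snd x \<le> 0" for x :: "real \<times> real"
  proof -
    have "(fst x)\<^sup>2 \<le> (- snd x)\<^sup>2"
      using that by (intro power_mono) auto
    with \<open>0 \<le> fst x\<close> show ?thesis
      by (simp add: mult_nonpos_nonneg)
  qed
  then show ?thesis
    unfolding mpvc_feasible_def by auto
qed

lemma closed_cone_example_feasible_set:
  "closed {x :: real \<times> real. 0 \<le> fst x \<and> fst x + snd x \<le> 0}"
  "cone {x :: real \<times> real. 0 \<le> fst x \<and> fst x + snd x \<le> 0}"
  by (intro closed_Collect_conj closed_Collect_le continuous_intros)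
    (auto simp: cone_def simp flip: distrib_left intro: mult_nonneg_nonpos)

theorem mainTheorem6:
  fixes f :: "real \<times> real \<Rightarrow> real"
    and g h G H :: "nat \<Rightarrow> real \<times> real \<Rightarrow> real"
  defines "f \<equiv> (\<lambda>x. \<bar>fst x\<bar> + \<bar>snd x\<bar>)"
    and "g \<equiv> (\<lambda>_ x. fst x + snd x)"
    and "h \<equiv> (\<lambda>_ _. 0)"
    and "G \<equiv> (\<lambda>_ x. (fst x)^2 - (snd x)^2)"
    and "H \<equiv> (\<lambda>_ x. fst x)"
  shows "local_min_on f (mpvc_feasible g 1 h 0 G H 1) (0, 0)
       \<and> \<not> mpvc_GQN g 1 h 0 G H 1 (0, 0)
       \<and> mpvc_ACQ g 1 h 0 G H 1 (0, 0)
       \<and> mpvc_penalty_exact f g 1 h 0 G H 1 (0, 0)"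
proof (intro conjI)
  let ?C = "{x :: real \<times> real. 0 \<le> fst x \<and> fst x + snd x \<le> 0}"
  have feasible: "mpvc_feasible g 1 h 0 G H 1 = ?C"
    unfolding g_def h_def G_def H_def by (rule example_feasible_set)
  have f_min: "f (0, 0) \<le> f y" for y
    by (simp add: f_def)
  then show "local_min_on f (mpvc_feasible g 1 h 0 G H 1) (0, 0)"
    unfolding local_min_on_def feasible by (auto intro: exI[of _ 1])
  show "mpvc_penalty_exact f g 1 h 0 G H 1 (0, 0)"
    using f_min by (intro mpvc_penalty_exact_at_global_min) (unfold feasible, simp_all)
  have "tangent_cone ?C (0, 0) = ?C"
    using tangent_cone_closed_cone[OF closed_cone_example_feasible_set] by (simp add: zero_prod_def)
  moreover have "mpvc_lin_cone g 1 h 0 G H 1 (0, 0) = ?C"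
    by (auto simp: mpvc_lin_cone_def g_def h_def G_def H_def grad_dir_fst_plus_snd grad_dir_fst
        grad_dir_squares_diff_origin)
  ultimately show "mpvc_ACQ g 1 h 0 G H 1 (0, 0)"
    unfolding mpvc_ACQ_def feasible by simp
  have approach: "(\<lambda>k. (1 / (real k + 1), 0 :: real)) \<longlonglongrightarrow> (0, 0)"
    by (intro tendsto_Pair LIMSEQ_inverse_Suc tendsto_const)
  show "\<not> mpvc_GQN g 1 h 0 G H 1 (0, 0)"
    by (rule not_mpvc_GQN_if_critical_biactive[where i = 0, OF _ _ _ _ approach])
      (simp_all add: G_def H_def grad_dir_squares_diff_origin)
qed

end
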